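(* Consider a smooth and decomposable probabilistic circuit defining $p(\mathbf{y}\mid\mathcal{Q},\mathcal{X})$ for every forecasting query $\mathcal{Q}$ and observation set $\mathcal{X}$, such that: (1) each leaf node is a distribution over exactly the variables $\mathbf{y}_c$ of the queries belonging to a single input channel $c$; (2) each leaf distribution over $\mathbf{y}_c$ depends on the query only through the subset $\mathcal{Q}_c$ of queries belonging to channel $c$ (and on $\mathcal{X}$); (3) the weights of the sum nodes do not depend on the query $\mathcal{Q}$ (they may depend on $\mathcal{X}$). Then for every channel $c$, $$\int p(\mathbf{y}\mid\mathcal{Q},\mathcal{X})\,d\mathbf{y}_c=p(\mathbf{y}_{-c}\mid\mathcal{Q}_{-c},\mathcal{X}),$$ where $\mathbf{y}_{-c}=\mathbf{y}\setminus\mathbf{y}_c$ and $\mathcal{Q}_{-c}=\mathcal{Q}\setminus\mathcal{Q}_c$; i.e. the circuit is marginalization consistent up to the leaf nodes (with respect to removing whole channels).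
   Context: Observations $\mathcal{X}=((t_n,c_n,y_n))_{n=1}^N$ with $(t_n,c_n,y_n)\in\mathbb{R}\times\{1,\dots,C\}\times\mathbb{R}$; a query $\mathcal{Q}=((t_m^{\mathrm{qry}},c_m^{\mathrm{qry}}))_{m}$ with targets $\mathbf{y}$. For channel $c$, $\mathcal{Q}_c$ denotes the queries with channel index $c$ and $\mathbf{y}_c$ the corresponding targets; the sets $\mathbf{y}_c$ partition $\mathbf{y}$. A probabilistic circuit is a rooted DAG with leaf nodes (normalized densities over a subset of variables, its scope), sum nodes computing $\sum_{k\in ch(n)}w_{n,k}p_k$ with $w_{n,k}\ge 0$, $\sum_k w_{n,k}=1$, and product nodes computing $\prod_{k\in ch(n)}p_k$; the scope of an inner node is the union of its children's scopes. Smoothness: all children of a sum node have the same scope. Decomposability: children of a product node have pairwise disjoint scopes. The circuit structure is fixed and does not depend on $\mathcal{Q}$; when $\mathcal{Q}_c$ is empty the leaves of channel $c$ are the constant $1$. *)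

theory Defs
  imports "HOL-Analysis.Analysis"
begin

text \<open>Observations X: list of (time, channel, value); queries Q: list of (time, channel);
  targets ys: real list with one entry per query.\<close>
type_synonym obs = "(real \<times> nat \<times> real) list"
type_synonym qry = "(real \<times> nat) list"

text \<open>A leaf of channel c carries a family of densities  f X Qc yc  over the targets yc of
  the channel-c queries Qc (conditioned on X); sum nodes carry weights depending on X only.\<close>
datatype pc =
    Leaf nat "obs \<Rightarrow> qry \<Rightarrow> real list \<Rightarrow> real"
  | SumN "((obs \<Rightarrow> real) \<times> pc) list"
  | ProdN "pc list"

fun scope :: "pc \<Rightarrow> nat set" where
  "scope (Leaf c f) = {c}"
| "scope (SumN cs) = (\<Union>p\<in>set cs. scope (snd p))"
| "scope (ProdN cs) = (\<Union>k\<in>set cs. scope k)"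

inductive smooth :: "pc \<Rightarrow> bool" where
  "smooth (Leaf c f)"
| "(\<forall>p\<in>set cs. smooth (snd p)) \<Longrightarrow> (\<forall>p\<in>set cs. \<forall>q\<in>set cs. scope (snd p) = scope (snd q))
     \<Longrightarrow> smooth (SumN cs)"
| "(\<forall>k\<in>set cs. smooth k) \<Longrightarrow> smooth (ProdN cs)"

inductive decomposable :: "pc \<Rightarrow> bool" where
  "decomposable (Leaf c f)"
| "(\<forall>p\<in>set cs. decomposable (snd p)) \<Longrightarrow> decomposable (SumN cs)"
| "(\<forall>k\<in>set cs. decomposable k) \<Longrightarrow>
     (\<forall>i<length cs. \<forall>j<length cs. i \<noteq> j \<longrightarrow> scope (cs ! i) \<inter> scope (cs ! j) = {})
     \<Longrightarrow> decomposable (ProdN cs)"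

text \<open>f X is a normalized density for channel c: for every list qs of channel-c queries
  (of length k) it is a measurable, nonnegative function on R^k integrating to 1.
  For qs = [] this says f X [] [] = 1 (the constant leaf).\<close>
definition leaf_density :: "nat \<Rightarrow> obs \<Rightarrow> (obs \<Rightarrow> qry \<Rightarrow> real list \<Rightarrow> real) \<Rightarrow> bool" where
  "leaf_density c X f \<longleftrightarrow>
     (\<forall>qs. (\<forall>q\<in>set qs. snd q = c) \<longrightarrow>
        (\<lambda>z. f X qs (map z [0..<length qs])) \<in> borel_measurable (PiM {..<length qs} (\<lambda>_. lborel))
      \<and> (\<forall>vs. length vs = length qs \<longrightarrow> 0 \<le> f X qs vs)
      \<and> (\<integral>\<^sup>+ z. ennreal (f X qs (map z [0..<length qs])) \<partial>PiM {..<length qs} (\<lambda>_. lborel)) = 1)"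

inductive params_ok :: "obs \<Rightarrow> pc \<Rightarrow> bool" where
  "leaf_density c X f \<Longrightarrow> params_ok X (Leaf c f)"
| "(\<forall>p\<in>set cs. 0 \<le> fst p X \<and> params_ok X (snd p)) \<Longrightarrow> (\<Sum>p\<leftarrow>cs. fst p X) = 1
     \<Longrightarrow> params_ok X (SumN cs)"
| "(\<forall>k\<in>set cs. params_ok X k) \<Longrightarrow> params_ok X (ProdN cs)"

definition qry_ch :: "nat \<Rightarrow> qry \<Rightarrow> qry" where
  "qry_ch c Q = filter (\<lambda>q. snd q = c) Q"
definition tgt_ch :: "nat \<Rightarrow> qry \<Rightarrow> real list \<Rightarrow> real list" where
  "tgt_ch c Q ys = map snd (filter (\<lambda>qv. snd (fst qv) = c) (zip Q ys))"
definition qry_rm :: "nat \<Rightarrow> qry \<Rightarrow> qry" where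
  "qry_rm c Q = filter (\<lambda>q. snd q \<noteq> c) Q"
definition tgt_rm :: "nat \<Rightarrow> qry \<Rightarrow> real list \<Rightarrow> real list" where
  "tgt_rm c Q ys = map snd (filter (\<lambda>qv. snd (fst qv) \<noteq> c) (zip Q ys))"

fun eval :: "obs \<Rightarrow> pc \<Rightarrow> qry \<Rightarrow> real list \<Rightarrow> real" where
  "eval X (Leaf c f) Q ys = f X (qry_ch c Q) (tgt_ch c Q ys)"
| "eval X (SumN cs) Q ys = (\<Sum>p\<leftarrow>cs. fst p X * eval X (snd p) Q ys)"
| "eval X (ProdN cs) Q ys = (\<Prod>k\<leftarrow>cs. eval X k Q ys)"

definition ch_idx :: "nat \<Rightarrow> qry \<Rightarrow> nat set" where
  "ch_idx c Q = {m. m < length Q \<and> snd (Q ! m) = c}"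

end

theory Submission
  imports Defs
begin

(* Integrate channel c out bottom-up. A leaf of another channel does not see the channel-c
   targets, and on the reduced query it sees exactly the same queries and targets as before.
   A leaf of channel c integrates to 1, which is also its value on the reduced query, where it
   is the constant leaf. Sum weights do not depend on the query, so sum nodes commute with the
   integral; smoothness puts c into the scope of every child. At a product node decomposability
   puts c into the scope of exactly one child, and the remaining factors are constants. *)

lemma vimage_reindex_PiE:
  assumes bij: "bij_betw g K I" and A: "\<And>k. k \<in> K \<Longrightarrow> A k \<subseteq> S (g k)"
  shows "(\<lambda>x. \<lambda>k\<in>K. x (g k)) -` Pi\<^sub>E K A \<inter> Pi\<^sub>E I S = Pi\<^sub>E I (\<lambda>j. A (inv_into K g j))"
proof (intro set_eqI iffI)
  fix x assume "x \<in> (\<lambda>x. \<lambda>k\<in>K. x (g k)) -` Pi\<^sub>E K A \<inter> Pi\<^sub>E I S"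
  then have ext: "x \<in> extensional I" and xA: "\<And>k. k \<in> K \<Longrightarrow> x (g k) \<in> A k"
    by (auto simp: PiE_iff)
  show "x \<in> Pi\<^sub>E I (\<lambda>j. A (inv_into K g j))"
  proof (rule PiE_I)
    fix j assume "j \<in> I"
    then show "x j \<in> A (inv_into K g j)"
      using xA[of "inv_into K g j"] bij
      by (simp add: bij_betw_inv_into_right bij_betw_imp_surj_on inv_into_into)
  qed (use ext in \<open>simp add: extensional_def\<close>)
next
  fix x assume x: "x \<in> Pi\<^sub>E I (\<lambda>j. A (inv_into K g j))"
  have "x (g k) \<in> A k" if "k \<in> K" for k
    using PiE_mem[OF x bij_betw_apply[OF bij that]] bij that by (simp add: bij_betw_inv_into_left)
  moreover have "x \<in> Pi\<^sub>E I S"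
    using x A bij by (auto simp: PiE_iff bij_betw_def inv_into_into subset_iff)
  ultimately show "x \<in> (\<lambda>x. \<lambda>k\<in>K. x (g k)) -` Pi\<^sub>E K A \<inter> Pi\<^sub>E I S"
    by auto
qed

lemma distr_PiM_bij_reindex:
  fixes g :: "'k \<Rightarrow> 'i" and M :: "'i \<Rightarrow> 'a measure"
  assumes "\<And>i. sigma_finite_measure (M i)" and fin: "finite I" and bij: "bij_betw g K I"
  shows "distr (PiM I M) (PiM K (\<lambda>k. M (g k))) (\<lambda>x. \<lambda>k\<in>K. x (g k)) = PiM K (\<lambda>k. M (g k))"
proof -
  interpret I: product_sigma_finite M
    by (simp add: product_sigma_finite_def assms(1))
  interpret K: product_sigma_finite "\<lambda>k. M (g k)"
    by (simp add: product_sigma_finite_def assms(1))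
  define h where "h = inv_into K g"
  have h: "bij_betw h I K" "\<And>j. j \<in> I \<Longrightarrow> g (h j) = j" "\<And>j. j \<in> I \<Longrightarrow> h j \<in> K"
    using bij by (auto simp: h_def bij_betw_inv_into bij_betw_inv_into_right inv_into_into
        bij_betw_imp_surj_on)
  have finK: "finite K"
    using bij fin bij_betw_finite by blast
  have meas: "(\<lambda>x. \<lambda>k\<in>K. x (g k)) \<in> PiM I M \<rightarrow>\<^sub>M PiM K (\<lambda>k. M (g k))"
    using bij by (intro measurable_restrict measurable_component_singleton) (auto simp: bij_betw_def)
  show ?thesis
  proof (rule K.PiM_eqI[OF finK])
    fix A assume A: "\<And>k. k \<in> K \<Longrightarrow> A k \<in> sets (M (g k))"
    have A': "A (h j) \<in> sets (M j)" if "j \<in> I" for j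
      using A[OF h(3)[OF that]] h(2)[OF that] by simp
    have "(\<lambda>x. \<lambda>k\<in>K. x (g k)) -` Pi\<^sub>E K A \<inter> space (PiM I M) = Pi\<^sub>E I (\<lambda>j. A (h j))"
      unfolding space_PiM h_def using A by (intro vimage_reindex_PiE bij sets.sets_into_space) simp
    moreover have "Pi\<^sub>E K A \<in> sets (PiM K (\<lambda>k. M (g k)))"
      using A by (intro sets_PiM_I_finite finK) auto
    ultimately have "emeasure (distr (PiM I M) (PiM K (\<lambda>k. M (g k))) (\<lambda>x. \<lambda>k\<in>K. x (g k))) (Pi\<^sub>E K A)
        = emeasure (PiM I M) (Pi\<^sub>E I (\<lambda>j. A (h j)))"
      using meas by (simp add: emeasure_distr)
    also have "\<dots> = (\<Prod>j\<in>I. emeasure (M j) (A (h j)))"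
      using A' by (rule I.emeasure_PiM[OF fin])
    also have "\<dots> = (\<Prod>j\<in>I. emeasure (M (g (h j))) (A (h j)))"
      using h(2) by simp
    also have "\<dots> = (\<Prod>k\<in>K. emeasure (M (g k)) (A k))"
      using prod.reindex_bij_betw[OF h(1), of "\<lambda>k. emeasure (M (g k)) (A k)"] .
    finally show "emeasure (distr (PiM I M) (PiM K (\<lambda>k. M (g k))) (\<lambda>x. \<lambda>k\<in>K. x (g k))) (Pi\<^sub>E K A)
        = (\<Prod>k\<in>K. emeasure (M (g k)) (A k))" .
  qed simp
qed

lemma
  fixes h :: "'a list \<Rightarrow> real" and M :: "'a measure"
  assumes "sigma_finite_measure M" and "distinct js" and "set js = I"
    and meas: "(\<lambda>z. h (map z [0..<length js])) \<in> borel_measurable (PiM {..<length js} (\<lambda>_. M))"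
  shows measurable_PiM_map_distinct_list:
      "(\<lambda>z. h (map z js)) \<in> borel_measurable (PiM I (\<lambda>_. M))"
    and nn_integral_PiM_map_distinct_list:
      "(\<integral>\<^sup>+z. ennreal (h (map z js)) \<partial>PiM I (\<lambda>_. M))
         = (\<integral>\<^sup>+z. ennreal (h (map z [0..<length js])) \<partial>PiM {..<length js} (\<lambda>_. M))"
proof -
  let ?K = "{..<length js}" and ?t = "\<lambda>z. \<lambda>k\<in>{..<length js}. z (js ! k)"
  have bij: "bij_betw (nth js) ?K I"
    using assms(2,3) by (intro bij_betw_nth) auto
  have t: "?t \<in> PiM I (\<lambda>_. M) \<rightarrow>\<^sub>M PiM ?K (\<lambda>_. M)"
    using bij by (intro measurable_restrict measurable_component_singleton) (auto simp: bij_betw_def)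
  have map_t: "map (?t z) [0..<length js] = map z js" for z
    by (rule nth_equalityI) auto
  show "(\<lambda>z. h (map z js)) \<in> borel_measurable (PiM I (\<lambda>_. M))"
    using measurable_comp[OF t meas] by (simp add: comp_def map_t)
  have "distr (PiM I (\<lambda>_. M)) (PiM ?K (\<lambda>_. M)) ?t = PiM ?K (\<lambda>_. M)"
    using distr_PiM_bij_reindex[of "\<lambda>_. M", OF assms(1) _ bij] assms(3) by auto
  then have "(\<integral>\<^sup>+z. ennreal (h (map z [0..<length js])) \<partial>PiM ?K (\<lambda>_. M))
      = (\<integral>\<^sup>+z. ennreal (h (map z [0..<length js])) \<partial>distr (PiM I (\<lambda>_. M)) (PiM ?K (\<lambda>_. M)) ?t)"
    by simp
  also have "\<dots> = (\<integral>\<^sup>+z. ennreal (h (map z js)) \<partial>PiM I (\<lambda>_. M))"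
    using meas t by (simp add: nn_integral_distr map_t)
  finally show "(\<integral>\<^sup>+z. ennreal (h (map z js)) \<partial>PiM I (\<lambda>_. M))
      = (\<integral>\<^sup>+z. ennreal (h (map z [0..<length js])) \<partial>PiM ?K (\<lambda>_. M))" ..
qed

lemma borel_measurable_sum_list:
  "(\<And>p. p \<in> set ps \<Longrightarrow> f p \<in> borel_measurable M) \<Longrightarrow>
    (\<lambda>z. \<Sum>p\<leftarrow>ps. f p z :: real) \<in> borel_measurable M"
  by (induction ps) auto

lemma borel_measurable_prod_list:
  "(\<And>p. p \<in> set ps \<Longrightarrow> f p \<in> borel_measurable M) \<Longrightarrow>
    (\<lambda>z. \<Prod>p\<leftarrow>ps. f p z :: real) \<in> borel_measurable M"
  by (induction ps) auto

lemma nn_integral_sum_list_cmult: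
  fixes w r :: "'a \<Rightarrow> real" and f :: "'a \<Rightarrow> 'b \<Rightarrow> real"
  assumes "\<And>p. p \<in> set ps \<Longrightarrow> 0 \<le> w p"
    and "\<And>p z. p \<in> set ps \<Longrightarrow> 0 \<le> f p z"
    and "\<And>p. p \<in> set ps \<Longrightarrow> f p \<in> borel_measurable M"
    and "\<And>p. p \<in> set ps \<Longrightarrow> (\<integral>\<^sup>+z. ennreal (f p z) \<partial>M) = ennreal (r p)"
    and "\<And>p. p \<in> set ps \<Longrightarrow> 0 \<le> r p"
  shows "(\<integral>\<^sup>+z. ennreal (\<Sum>p\<leftarrow>ps. w p * f p z) \<partial>M) = ennreal (\<Sum>p\<leftarrow>ps. w p * r p)"
  using assms
proof (induction ps)
  case (Cons p ps)
  have rest_nonneg: "0 \<le> (\<Sum>q\<leftarrow>ps. w q * f q z)" "0 \<le> (\<Sum>q\<leftarrow>ps. w q * r q)" for z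
    using Cons.prems by (auto intro!: sum_list_nonneg)
  have "(\<integral>\<^sup>+z. ennreal (\<Sum>q\<leftarrow>p # ps. w q * f q z) \<partial>M)
      = (\<integral>\<^sup>+z. ennreal (w p) * ennreal (f p z) + ennreal (\<Sum>q\<leftarrow>ps. w q * f q z) \<partial>M)"
    using Cons.prems rest_nonneg by (simp add: ennreal_plus ennreal_mult)
  also have "\<dots> = ennreal (w p) * (\<integral>\<^sup>+z. ennreal (f p z) \<partial>M) + (\<integral>\<^sup>+z. ennreal (\<Sum>q\<leftarrow>ps. w q * f q z) \<partial>M)"
  proof -
    have "f p \<in> borel_measurable M" "(\<lambda>z. \<Sum>q\<leftarrow>ps. w q * f q z) \<in> borel_measurable M"
      using Cons.prems by (auto intro!: borel_measurable_sum_list)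
    then show ?thesis
      by (simp add: nn_integral_add nn_integral_cmult)
  qed
  also have "\<dots> = ennreal (w p) * ennreal (r p) + ennreal (\<Sum>q\<leftarrow>ps. w q * r q)"
    using Cons by simp
  also have "\<dots> = ennreal (\<Sum>q\<leftarrow>p # ps. w q * r q)"
    using Cons.prems rest_nonneg by (simp add: ennreal_plus ennreal_mult)
  finally show ?case .
qed simp

lemma prod_list_map_remove_nth:
  "j < length xs \<Longrightarrow> (\<Prod>x\<leftarrow>xs. f x) = f (xs ! j) * (\<Prod>i\<in>{..<length xs} - {j}. f (xs ! i))"
  by (simp add: prod.list_conv_set_nth atLeast0LessThan prod.remove)

lemma filter_eq_map_nth_filter_upt:
  "filter P xs = map (nth xs) (filter (\<lambda>i. P (xs ! i)) [0..<length xs])"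
proof (induction xs rule: rev_induct)
  case (snoc x xs)
  have "map ((!) (xs @ [x])) (filter (\<lambda>i. P ((xs @ [x]) ! i)) [0..<length xs])
      = map ((!) xs) (filter (\<lambda>i. P (xs ! i)) [0..<length xs])"
    by (auto simp: nth_append intro!: map_cong filter_cong)
  then show ?case
    using snoc by simp
qed simp

definition ch_pos :: "nat \<Rightarrow> qry \<Rightarrow> nat list" where
  "ch_pos c Q = filter (\<lambda>m. snd (Q ! m) = c) [0..<length Q]"

definition tgt_upd :: "nat \<Rightarrow> qry \<Rightarrow> real list \<Rightarrow> (nat \<Rightarrow> real) \<Rightarrow> real list" where
  "tgt_upd c Q ys z = map (\<lambda>m. if m \<in> ch_idx c Q then z m else ys ! m) [0..<length Q]"

lemma length_tgt_upd [simp]: "length (tgt_upd c Q ys z) = length Q"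
  by (simp add: tgt_upd_def)

lemma set_ch_pos: "set (ch_pos c Q) = ch_idx c Q"
  by (auto simp: ch_pos_def ch_idx_def)

lemma distinct_ch_pos: "distinct (ch_pos c Q)"
  by (simp add: ch_pos_def)

lemma qry_ch_eq_map_ch_pos: "qry_ch c Q = map (nth Q) (ch_pos c Q)"
  unfolding qry_ch_def ch_pos_def by (rule filter_eq_map_nth_filter_upt)

lemma tgt_ch_eq_map_ch_pos: "length ys = length Q \<Longrightarrow> tgt_ch c Q ys = map (nth ys) (ch_pos c Q)"
  unfolding tgt_ch_def ch_pos_def filter_eq_map_nth_filter_upt[where xs="zip Q ys"]
  by (auto intro!: map_cong filter_cong)

lemma length_tgt_ch: "length ys = length Q \<Longrightarrow> length (tgt_ch c Q ys) = length (qry_ch c Q)"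
  by (simp add: tgt_ch_eq_map_ch_pos qry_ch_eq_map_ch_pos)

lemma qry_rm_eq_map_fst: "length ys = length Q \<Longrightarrow>
    qry_rm c Q = map fst (filter (\<lambda>qv. snd (fst qv) \<noteq> c) (zip Q ys))"
  by (induction Q arbitrary: ys) (auto simp: qry_rm_def length_Suc_conv)

lemma length_tgt_rm: "length ys = length Q \<Longrightarrow> length (tgt_rm c Q ys) = length (qry_rm c Q)"
  by (simp add: tgt_rm_def qry_rm_eq_map_fst[of ys Q c])

lemma qry_ch_qry_rm:
  "qry_ch c' (qry_rm c Q) = (if c' = c then [] else qry_ch c' Q)"
  by (auto simp: qry_ch_def qry_rm_def filter_empty_conv intro: filter_cong)

lemma tgt_ch_tgt_rm: "length ys = length Q \<Longrightarrow>
    tgt_ch c' (qry_rm c Q) (tgt_rm c Q ys) = (if c' = c then [] else tgt_ch c' Q ys)"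
  unfolding tgt_ch_def tgt_rm_def qry_rm_eq_map_fst[of ys Q c] zip_map_fst_snd
  by (auto simp: filter_empty_conv intro!: arg_cong[where f="map snd"] filter_cong)

lemma tgt_ch_tgt_upd: "length ys = length Q \<Longrightarrow>
    tgt_ch c' Q (tgt_upd c Q ys z) = (if c' = c then map z (ch_pos c Q) else tgt_ch c' Q ys)"
  by (auto simp: tgt_ch_eq_map_ch_pos tgt_upd_def ch_pos_def ch_idx_def)

lemma leaf_density_Nil:
  assumes "leaf_density c X f"
  shows "f X [] [] = 1"
proof -
  have "(\<integral>\<^sup>+z. ennreal (f X [] (map z [0..<length ([] :: qry)]))
      \<partial>PiM {..<length ([] :: qry)} (\<lambda>_. lborel :: real measure)) = 1"
    using assms unfolding leaf_density_def by (metis empty_iff empty_set)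
  then have "ennreal (f X [] []) = 1"
    by (simp add: PiM_empty nn_integral_count_space_finite max.absorb2)
  then show ?thesis
    by (simp add: ennreal_eq_1)
qed

lemma
  assumes "leaf_density c X f"
  shows measurable_leaf_density_ch_pos:
      "(\<lambda>z. f X (qry_ch c Q) (map z (ch_pos c Q))) \<in> borel_measurable (PiM (ch_idx c Q) (\<lambda>_. lborel))"
    and nn_integral_leaf_density_ch_pos:
      "(\<integral>\<^sup>+z. ennreal (f X (qry_ch c Q) (map z (ch_pos c Q))) \<partial>PiM (ch_idx c Q) (\<lambda>_. lborel)) = 1"
proof -
  have len: "length (ch_pos c Q) = length (qry_ch c Q)"
    by (simp add: qry_ch_eq_map_ch_pos)
  have "\<forall>q\<in>set (qry_ch c Q). snd q = c"
    by (simp add: qry_ch_def)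
  then have meas: "(\<lambda>z. f X (qry_ch c Q) (map z [0..<length (ch_pos c Q)]))
        \<in> borel_measurable (PiM {..<length (ch_pos c Q)} (\<lambda>_. lborel))"
    and int: "(\<integral>\<^sup>+z. ennreal (f X (qry_ch c Q) (map z [0..<length (ch_pos c Q)]))
        \<partial>PiM {..<length (ch_pos c Q)} (\<lambda>_. lborel)) = 1"
    using assms unfolding leaf_density_def len by blast+
  show "(\<lambda>z. f X (qry_ch c Q) (map z (ch_pos c Q))) \<in> borel_measurable (PiM (ch_idx c Q) (\<lambda>_. lborel))"
    by (rule measurable_PiM_map_distinct_list[OF _ distinct_ch_pos set_ch_pos meas]) unfold_locales
  show "(\<integral>\<^sup>+z. ennreal (f X (qry_ch c Q) (map z (ch_pos c Q))) \<partial>PiM (ch_idx c Q) (\<lambda>_. lborel)) = 1"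
    using nn_integral_PiM_map_distinct_list[OF _ distinct_ch_pos set_ch_pos meas] int
    by (simp add: lborel.sigma_finite_measure_axioms)
qed

inductive_simps decomposable_SumN_iff: "decomposable (SumN cs)"
inductive_simps decomposable_ProdN_iff: "decomposable (ProdN cs)"
inductive_simps params_ok_Leaf_iff: "params_ok X (Leaf c f)"
inductive_simps params_ok_SumN_iff: "params_ok X (SumN cs)"
inductive_simps params_ok_ProdN_iff: "params_ok X (ProdN cs)"

lemma eval_nonneg:
  "params_ok X n \<Longrightarrow> length ys = length Q \<Longrightarrow> 0 \<le> eval X n Q ys"
proof (induction X n rule: params_ok.induct)
  case (1 c X f)
  have "\<forall>q\<in>set (qry_ch c Q). snd q = c"
    by (simp add: qry_ch_def)
  with 1 show ?case
    by (simp add: leaf_density_def length_tgt_ch)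
next
  case (2 cs X)
  then show ?case
    by (fastforce intro!: sum_list_nonneg mult_nonneg_nonneg)
qed (auto intro!: prod_list_nonneg)

lemma eval_tgt_upd_eq_eval_qry_rm:
  assumes "c \<notin> scope n" and "length ys = length Q"
  shows "eval X n Q (tgt_upd c Q ys z) = eval X n (qry_rm c Q) (tgt_rm c Q ys)"
  using assms
proof (induction n)
  case (SumN cs)
  then show ?case
    by (auto intro!: arg_cong[where f=sum_list] map_cong simp: prod_set_simps)
qed (auto simp: tgt_ch_tgt_upd qry_ch_qry_rm tgt_ch_tgt_rm intro!: arg_cong[where f=prod_list])

lemma measurable_eval_tgt_upd:
  "params_ok X n \<Longrightarrow> length ys = length Q \<Longrightarrow>
    (\<lambda>z. eval X n Q (tgt_upd c Q ys z)) \<in> borel_measurable (PiM (ch_idx c Q) (\<lambda>_. lborel))"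
proof (induction X n rule: params_ok.induct)
  case (1 c' X f)
  then show ?case
    by (cases "c' = c") (simp_all add: tgt_ch_tgt_upd measurable_leaf_density_ch_pos)
qed (auto intro!: borel_measurable_sum_list borel_measurable_prod_list)

lemma decomposable_ProdN_unique_child:
  assumes "decomposable (ProdN cs)" and "c \<in> scope (ProdN cs)"
  obtains j where "j < length cs" "c \<in> scope (cs ! j)" "\<And>i. i < length cs \<Longrightarrow> i \<noteq> j \<Longrightarrow> c \<notin> scope (cs ! i)"
proof -
  obtain j where "j < length cs" "c \<in> scope (cs ! j)"
    using assms(2) by (auto simp: in_set_conv_nth)
  moreover have "c \<notin> scope (cs ! i)" if "i < length cs" "i \<noteq> j" for i
    using assms(1) that calculation unfolding decomposable_ProdN_iff by blast
  ultimately show ?thesis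
    using that by blast
qed

lemma nn_integral_eval_SumN:
  assumes "params_ok X (SumN cs)" and "length ys = length Q"
    and "\<And>p. p \<in> set cs \<Longrightarrow>
      (\<integral>\<^sup>+z. ennreal (eval X (snd p) Q (tgt_upd c Q ys z)) \<partial>PiM (ch_idx c Q) (\<lambda>_. lborel))
        = ennreal (eval X (snd p) (qry_rm c Q) (tgt_rm c Q ys))"
  shows "(\<integral>\<^sup>+z. ennreal (eval X (SumN cs) Q (tgt_upd c Q ys z)) \<partial>PiM (ch_idx c Q) (\<lambda>_. lborel))
       = ennreal (eval X (SumN cs) (qry_rm c Q) (tgt_rm c Q ys))"
  using assms
  by (simp, intro nn_integral_sum_list_cmult)
    (auto simp: params_ok_SumN_iff eval_nonneg length_tgt_rm measurable_eval_tgt_upd)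

lemma nn_integral_eval_ProdN:
  assumes "params_ok X (ProdN cs)" and "length ys = length Q" and j: "j < length cs"
    and "\<And>i. i < length cs \<Longrightarrow> i \<noteq> j \<Longrightarrow> c \<notin> scope (cs ! i)"
    and IH: "(\<integral>\<^sup>+z. ennreal (eval X (cs ! j) Q (tgt_upd c Q ys z)) \<partial>PiM (ch_idx c Q) (\<lambda>_. lborel))
        = ennreal (eval X (cs ! j) (qry_rm c Q) (tgt_rm c Q ys))"
  shows "(\<integral>\<^sup>+z. ennreal (eval X (ProdN cs) Q (tgt_upd c Q ys z)) \<partial>PiM (ch_idx c Q) (\<lambda>_. lborel))
       = ennreal (eval X (ProdN cs) (qry_rm c Q) (tgt_rm c Q ys))"
proof -
  have ok: "\<And>i. i < length cs \<Longrightarrow> params_ok X (cs ! i)"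
    using assms(1) by (simp add: params_ok_ProdN_iff)
  define K where "K = (\<Prod>i\<in>{..<length cs} - {j}. eval X (cs ! i) (qry_rm c Q) (tgt_rm c Q ys))"
  have "0 \<le> K"
    using ok assms(2) unfolding K_def by (auto intro!: prod_nonneg eval_nonneg simp: length_tgt_rm)
  have "eval X (ProdN cs) Q (tgt_upd c Q ys z) = eval X (cs ! j) Q (tgt_upd c Q ys z) * K" for z
    using assms(2,4) unfolding K_def
    by (simp add: prod_list_map_remove_nth[OF j] eval_tgt_upd_eq_eval_qry_rm)
  then have "(\<integral>\<^sup>+z. ennreal (eval X (ProdN cs) Q (tgt_upd c Q ys z)) \<partial>PiM (ch_idx c Q) (\<lambda>_. lborel))
      = (\<integral>\<^sup>+z. ennreal (eval X (cs ! j) Q (tgt_upd c Q ys z)) \<partial>PiM (ch_idx c Q) (\<lambda>_. lborel)) * ennreal K"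
    using ok[OF j] assms(2) \<open>0 \<le> K\<close>
    by (simp add: ennreal_mult eval_nonneg nn_integral_multc measurable_eval_tgt_upd)
  also have "\<dots> = ennreal (eval X (cs ! j) (qry_rm c Q) (tgt_rm c Q ys) * K)"
    using IH ok[OF j] assms(2) \<open>0 \<le> K\<close> by (simp add: ennreal_mult eval_nonneg length_tgt_rm)
  also have "\<dots> = ennreal (eval X (ProdN cs) (qry_rm c Q) (tgt_rm c Q ys))"
    unfolding K_def by (simp add: prod_list_map_remove_nth[OF j])
  finally show ?thesis .
qed

lemma nn_integral_eval_tgt_upd:
  assumes "smooth n" and "decomposable n" and "params_ok X n" and "length ys = length Q"
    and "c \<in> scope n"
  shows "(\<integral>\<^sup>+z. ennreal (eval X n Q (tgt_upd c Q ys z)) \<partial>PiM (ch_idx c Q) (\<lambda>_. lborel))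
       = ennreal (eval X n (qry_rm c Q) (tgt_rm c Q ys))"
  using assms
proof (induction n rule: smooth.induct)
  case (1 c' f)
  then have "c' = c" and "leaf_density c X f"
    by (simp_all add: params_ok_Leaf_iff)
  with \<open>length ys = length Q\<close> show ?case
    by (simp add: tgt_ch_tgt_upd qry_ch_qry_rm tgt_ch_tgt_rm nn_integral_leaf_density_ch_pos
        leaf_density_Nil)
next
  case (2 cs)
  have "c \<in> scope (snd p)" if "p \<in> set cs" for p
    using "2.hyps" "2.prems"(4) that unfolding scope.simps by blast
  with "2.IH" "2.prems"(1-3) show ?case
    by (intro nn_integral_eval_SumN) (auto simp: decomposable_SumN_iff params_ok_SumN_iff)
next
  case (3 cs)
  obtain j where j: "j < length cs" "c \<in> scope (cs ! j)"
    and "\<And>i. i < length cs \<Longrightarrow> i \<noteq> j \<Longrightarrow> c \<notin> scope (cs ! i)"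
    using decomposable_ProdN_unique_child "3.prems"(1,4) by blast
  with "3.IH" "3.prems"(1-3) show ?case
    by (intro nn_integral_eval_ProdN[where j=j]) (auto simp: decomposable_ProdN_iff params_ok_ProdN_iff)
qed

theorem lemmaA1:
  fixes C :: nat and root :: pc
  assumes "smooth root" and "decomposable root"
    and "\<forall>X. params_ok X root"
    and "scope root = {1..C}"
  shows "\<forall>(X::obs) (Q::qry) (ys::real list) c.
           length ys = length Q \<longrightarrow> (\<forall>q\<in>set Q. snd q \<in> {1..C}) \<longrightarrow> c \<in> {1..C} \<longrightarrow>
           (\<integral>\<^sup>+ z. ennreal (eval X root Q
                  (map (\<lambda>m. if m \<in> ch_idx c Q then z m else ys ! m) [0..<length Q]))
              \<partial>PiM (ch_idx c Q) (\<lambda>_. lborel))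
           = ennreal (eval X root (qry_rm c Q) (tgt_rm c Q ys))"
  using nn_integral_eval_tgt_upd[OF assms(1,2)] assms(3,4) unfolding tgt_upd_def by simp

end
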